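(* Let $\mathcal{T}$ be a set of monomials in $[n]$, and let $D^\star$ be the Hasse diagram of $\mathcal{M}^\star$ and $G^\star$ its underlying undirected graph. If $G^\star$ contains a cycle, then one of the following holds: (A) there exist $m_1,m_2,m_3\in\mathcal{T}$ with $m_1\cap m_2\cap m_3\neq\emptyset$ such that $m_3\cap(m_1\cup m_2)$ is a proper superset of both $m_3\cap m_1$ and $m_3\cap m_2$; (B) there exist pairwise different $m_1,\dots,m_k\in\mathcal{T}$, $k\ge3$, such that for all $i,j\in[k]$, $m_i\cap m_j\neq\emptyset$ if and only if $i$ and $j$ differ by at most $1$ modulo $k$.
   Context: A monomial is a nonempty subset of $[n]=\{1,\dots,n\}$; $\mathcal{S}=\{\{i\}:i\in[n]\}$. Define $\mathcal{M}'=\{\bigcap_{m\in I}m: I\subseteq\mathcal{T}, I\neq\emptyset, \bigcap_{m\in I}m\neq\emptyset\}$ and $\mathcal{M}^\star=\mathcal{M}'\cup\mathcal{S}$. The digraph $D^\star$ has node set $\mathcal{M}^\star$ and an arc $(m_1,m_2)$ for $m_1,m_2\in\mathcal{M}^\star$ if and only if $m_2\subsetneq m_1$ and there is no $m_3\in\mathcal{M}^\star$ with $m_2\subsetneq m_3\subsetneq m_1$. *)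

theory Defs
  imports Main
begin

definition monomial :: "nat \<Rightarrow> nat set \<Rightarrow> bool" where
  "monomial n m \<longleftrightarrow> m \<noteq> {} \<and> m \<subseteq> {1..n}"

definition singletons :: "nat \<Rightarrow> nat set set" where
  "singletons n = {{i} | i. i \<in> {1..n}}"

definition Mprime :: "nat set set \<Rightarrow> nat set set" where
  "Mprime T = {\<Inter> I | I. I \<subseteq> T \<and> I \<noteq> {} \<and> \<Inter> I \<noteq> {}}"

definition Mstar :: "nat \<Rightarrow> nat set set \<Rightarrow> nat set set" where
  "Mstar n T = Mprime T \<union> singletons n"

definition hasse_arc :: "nat \<Rightarrow> nat set set \<Rightarrow> nat set \<Rightarrow> nat set \<Rightarrow> bool" where
  "hasse_arc n T m1 m2 \<longleftrightarrow> m1 \<in> Mstar n T \<and> m2 \<in> Mstar n T \<and> m2 \<subset> m1 \<and>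
     \<not> (\<exists>m3 \<in> Mstar n T. m2 \<subset> m3 \<and> m3 \<subset> m1)"

definition Gstar_adj :: "nat \<Rightarrow> nat set set \<Rightarrow> nat set \<Rightarrow> nat set \<Rightarrow> bool" where
  "Gstar_adj n T a b \<longleftrightarrow> hasse_arc n T a b \<or> hasse_arc n T b a"

definition Gstar_has_cycle :: "nat \<Rightarrow> nat set set \<Rightarrow> bool" where
  "Gstar_has_cycle n T \<longleftrightarrow> (\<exists>k (c :: nat \<Rightarrow> nat set). k \<ge> 3 \<and> inj_on c {0..<k} \<and>
     (\<forall>i<k. c i \<in> Mstar n T) \<and> (\<forall>i<k. Gstar_adj n T (c i) (c ((i + 1) mod k))))"

end

theory Submission
  imports Defs
begin

text \<open>If three distinct members of \<open>T\<close> meet pairwise, they already form alternative (B) with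
  \<open>k = 3\<close>. Otherwise every nonempty set lies in at most two members of \<open>T\<close>, so an element of
  \<open>M'\<close> is either a member of \<open>T\<close> or the intersection of exactly two members, and every arc of
  \<open>D\<^sup>\<star>\<close> between elements of \<open>M'\<close> goes from the first kind down to the second. Singletons
  outside \<open>M'\<close> are leaves of \<open>G\<^sup>\<star>\<close>; hence a cycle of \<open>G\<^sup>\<star>\<close> lies in \<open>M'\<close>, alternates
  between the two kinds, and its members of \<open>T\<close> form a cycle of the intersection graph of \<open>T\<close>.
  A shortest cycle of that graph is induced, which is (B).\<close>

definition intersection_cycle :: "'a set set \<Rightarrow> nat \<Rightarrow> (nat \<Rightarrow> 'a set) \<Rightarrow> bool" where
  "intersection_cycle T k c \<longleftrightarrow> k \<ge> 3 \<and> inj_on c {0..<k} \<and> (\<forall>i<k. c i \<in> T) \<and>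
     (\<forall>i<k. c i \<inter> c ((i + 1) mod k) \<noteq> {})"

lemma intersection_cycle_shortcut:
  assumes c: "intersection_cycle T k c" and ij: "i < j" "j < k" and chord: "c i \<inter> c j \<noteq> {}"
    and nj: "j \<noteq> i + 1" and "\<not> (i = 0 \<and> j = k - 1)"
  shows "intersection_cycle T (j - i + 1) (\<lambda>t. c (i + t))" and "j - i + 1 < k"
proof -
  let ?l = "j - i + 1"
  show "?l < k" using assms by auto
  have inj: "inj_on c {0..<k}" and inT: "\<forall>i<k. c i \<in> T" and edge: "\<forall>i<k. c i \<inter> c ((i + 1) mod k) \<noteq> {}"
    using c unfolding intersection_cycle_def by auto
  have "inj_on c ((+) i ` {0..<?l})" by (rule inj_on_subset[OF inj]) (use ij in auto)
  then have "inj_on (c \<circ> (+) i) {0..<?l}" by (intro comp_inj_on) simp_all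
  then have "inj_on (\<lambda>t. c (i + t)) {0..<?l}" unfolding comp_def .
  moreover have "c (i + t) \<inter> c (i + (t + 1) mod ?l) \<noteq> {}" if "t < ?l" for t
  proof (cases "t + 1 < ?l")
    case True
    then show ?thesis using edge[rule_format, of "i + t"] ij by (simp add: add.assoc)
  next
    case False
    then have "t = j - i" using that by simp
    then show ?thesis using chord ij by (simp add: Int_commute)
  qed
  ultimately show "intersection_cycle T ?l (\<lambda>t. c (i + t))"
    using ij nj inT unfolding intersection_cycle_def by simp
qed

lemma shortest_intersection_cycle_induced:
  assumes c: "intersection_cycle T k c" and shortest: "\<And>l d. intersection_cycle T l d \<Longrightarrow> k \<le> l"
    and nonempty: "{} \<notin> T" and "i < k" "j < k"
  shows "c i \<inter> c j \<noteq> {} \<longleftrightarrow> (j = i \<or> j = (i + 1) mod k \<or> i = (j + 1) mod k)"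
proof -
  have cycle_edge: "j = i + 1 \<or> (i = 0 \<and> j = k - 1)"
    if "i < j" "j < k" "c i \<inter> c j \<noteq> {}" for i j
    using intersection_cycle_shortcut[OF c that] shortest by (meson leD)
  have "k \<ge> 3" and inT: "\<forall>i<k. c i \<in> T" and edge: "\<forall>i<k. c i \<inter> c ((i + 1) mod k) \<noteq> {}"
    using c unfolding intersection_cycle_def by auto
  show ?thesis
  proof
    assume "c i \<inter> c j \<noteq> {}"
    then show "j = i \<or> j = (i + 1) mod k \<or> i = (j + 1) mod k"
      using cycle_edge[of i j] cycle_edge[of j i] \<open>k \<ge> 3\<close> \<open>i < k\<close> \<open>j < k\<close>
      by (cases i j rule: linorder_cases) (auto simp: Int_commute)
  next
    assume "j = i \<or> j = (i + 1) mod k \<or> i = (j + 1) mod k"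
    then show "c i \<inter> c j \<noteq> {}"
      using edge inT nonempty \<open>i < k\<close> \<open>j < k\<close> by (auto simp: Int_commute)
  qed
qed

lemma induced_intersection_cycle_exists:
  assumes "intersection_cycle T k0 c0" and "{} \<notin> T"
  shows "\<exists>k (m :: nat \<Rightarrow> 'a set). k \<ge> 3 \<and> inj_on m {0..<k} \<and> (\<forall>i<k. m i \<in> T) \<and>
            (\<forall>i<k. \<forall>j<k. m i \<inter> m j \<noteq> {} \<longleftrightarrow>
                (j = i \<or> j = (i + 1) mod k \<or> i = (j + 1) mod k))"
proof -
  obtain k where "\<exists>c. intersection_cycle T k c" and shortest: "\<And>l d. intersection_cycle T l d \<Longrightarrow> k \<le> l"
    using assms(1) exists_least_iff[of "\<lambda>k. \<exists>c. intersection_cycle T k c"] by (metis not_le)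
  then obtain c where c: "intersection_cycle T k c" by blast
  have "\<forall>i<k. \<forall>j<k. c i \<inter> c j \<noteq> {} \<longleftrightarrow> (j = i \<or> j = (i + 1) mod k \<or> i = (j + 1) mod k)"
    by (intro allI impI shortest_intersection_cycle_induced[OF c _ assms(2)] shortest)
  with c show ?thesis unfolding intersection_cycle_def by blast
qed

definition supersets :: "'a set set \<Rightarrow> 'a set \<Rightarrow> 'a set set" where
  "supersets T v = {m \<in> T. v \<subseteq> m}"

lemma Mprime_nonempty: "v \<in> Mprime T \<Longrightarrow> v \<noteq> {}"
  unfolding Mprime_def by blast

lemma Mstar_nonempty: "v \<in> Mstar n T \<Longrightarrow> v \<noteq> {}"
  unfolding Mstar_def singletons_def using Mprime_nonempty by blast

lemma Inter_supersets_in_Mprime: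
  assumes "supersets T v \<noteq> {}" and "v \<noteq> {}"
  shows "\<Inter>(supersets T v) \<in> Mprime T"
proof -
  have "v \<subseteq> \<Inter>(supersets T v)" unfolding supersets_def by blast
  then show ?thesis using assms unfolding Mprime_def supersets_def by blast
qed

lemma Mprime_eq_Inter_supersets:
  assumes "v \<in> Mprime T"
  shows "\<Inter>(supersets T v) = v" and "supersets T v \<noteq> {}"
proof -
  obtain I where I: "I \<subseteq> T" "I \<noteq> {}" "v = \<Inter>I"
    using assms unfolding Mprime_def by blast
  then have "I \<subseteq> supersets T v" unfolding supersets_def by blast
  then show "\<Inter>(supersets T v) = v" and "supersets T v \<noteq> {}"
    using I unfolding supersets_def by blast+
qed

lemma hasse_arc_psubset: "hasse_arc n T a b \<Longrightarrow> b \<subset> a"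
  unfolding hasse_arc_def by blast

lemma hasse_arc_to_singleton:
  assumes arc: "hasse_arc n T a {x}" and x: "{x} \<notin> Mprime T"
  shows "a = \<Inter>(supersets T {x})"
proof -
  let ?z = "\<Inter>(supersets T {x})"
  have "a \<in> Mstar n T" and "{x} \<subset> a" and covers: "\<not> (\<exists>m \<in> Mstar n T. {x} \<subset> m \<and> m \<subset> a)"
    using arc unfolding hasse_arc_def by auto
  have "a \<in> Mprime T"
    using \<open>a \<in> Mstar n T\<close> \<open>{x} \<subset> a\<close> unfolding Mstar_def singletons_def by auto
  have "supersets T a \<subseteq> supersets T {x}"
    using \<open>{x} \<subset> a\<close> unfolding supersets_def by auto
  then have "?z \<subseteq> a" and "supersets T {x} \<noteq> {}"
    using Mprime_eq_Inter_supersets[OF \<open>a \<in> Mprime T\<close>] by auto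
  then have "?z \<in> Mprime T" by (intro Inter_supersets_in_Mprime) simp_all
  moreover have "x \<in> ?z" unfolding supersets_def by auto
  ultimately have "?z \<in> Mstar n T" and "{x} \<subset> ?z"
    using x unfolding Mstar_def by auto
  then show ?thesis using covers \<open>?z \<subseteq> a\<close> by blast
qed

text \<open>A singleton outside \<open>M'\<close> has a single neighbour in \<open>G\<^sup>\<star>\<close>, so it lies on no cycle.\<close>

lemma Gstar_adj_singleton_unique:
  assumes x: "{x} \<notin> Mprime T" and "Gstar_adj n T a {x}" and "Gstar_adj n T {x} b"
  shows "a = b"
proof -
  have "\<not> hasse_arc n T {x} v" for v
    using Mstar_nonempty[of v n T] unfolding hasse_arc_def by blast
  then have "hasse_arc n T a {x}" and "hasse_arc n T b {x}"
    using assms(2,3) unfolding Gstar_adj_def by auto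
  then show ?thesis using hasse_arc_to_singleton x by metis
qed

definition triangle_free :: "'a set set \<Rightarrow> bool" where
  "triangle_free T \<longleftrightarrow> (\<forall>a\<in>T. \<forall>b\<in>T. \<forall>c\<in>T.
     a \<inter> b \<noteq> {} \<longrightarrow> b \<inter> c \<noteq> {} \<longrightarrow> a \<inter> c \<noteq> {} \<longrightarrow> a = b \<or> b = c \<or> a = c)"

lemma intersection_cycle_of_triangle:
  assumes "\<not> triangle_free T"
  shows "\<exists>c. intersection_cycle T 3 c"
proof -
  obtain a b c where "a \<in> T" "b \<in> T" "c \<in> T" "distinct [a, b, c]"
    and "a \<inter> b \<noteq> {}" "b \<inter> c \<noteq> {}" "c \<inter> a \<noteq> {}"
    using assms unfolding triangle_free_def by (auto simp: Int_commute)
  moreover have below_3: "i < 3 \<longleftrightarrow> i = 0 \<or> i = 1 \<or> i = (2::nat)" for i by auto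
  moreover have "inj_on (nth [a, b, c]) {0..<3}"
    by (rule inj_on_nth) (use \<open>distinct [a, b, c]\<close> in auto)
  ultimately have "intersection_cycle T 3 (nth [a, b, c])"
    unfolding intersection_cycle_def by (simp add: below_3)
  then show ?thesis by blast
qed

lemma card_supersets_le_2:
  assumes "finite T" and "triangle_free T" and "v \<noteq> {}"
  shows "card (supersets T v) \<le> 2"
proof (rule ccontr)
  assume "\<not> ?thesis"
  then have "card (supersets T v) \<ge> 3" by simp
  then obtain a b c where "a \<in> supersets T v" "b \<in> supersets T v" "c \<in> supersets T v"
    and "a \<noteq> b" "b \<noteq> c" "a \<noteq> c"
    by (auto simp: numeral_3_eq_3 card_le_Suc_iff)
  then show False using assms(2,3) unfolding triangle_free_def supersets_def by blast
qed

lemma hasse_arc_card_supersets: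
  assumes "finite T" and "triangle_free T" and arc: "hasse_arc n T a b"
    and a: "a \<in> Mprime T" and b: "b \<in> Mprime T"
  shows "card (supersets T a) = 1" and "card (supersets T b) = 2"
proof -
  have "b \<subset> a" using arc by (rule hasse_arc_psubset)
  then have "supersets T a \<subseteq> supersets T b" unfolding supersets_def by auto
  moreover have "supersets T a \<noteq> supersets T b"
  proof
    assume "supersets T a = supersets T b"
    then have "a = b"
      using Mprime_eq_Inter_supersets(1)[OF a] Mprime_eq_Inter_supersets(1)[OF b] by metis
    with \<open>b \<subset> a\<close> show False by simp
  qed
  moreover have finite_supersets: "finite (supersets T v)" for v
    using \<open>finite T\<close> unfolding supersets_def by simp
  ultimately have "card (supersets T a) < card (supersets T b)"
    by (simp add: psubset_card_mono psubset_eq)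
  moreover have "card (supersets T a) \<noteq> 0"
    using Mprime_eq_Inter_supersets(2)[OF a] finite_supersets by simp
  moreover have "card (supersets T b) \<le> 2"
    using card_supersets_le_2[OF assms(1,2) Mprime_nonempty[OF b]] .
  ultimately show "card (supersets T a) = 1" and "card (supersets T b) = 2" by linarith+
qed

lemma Mprime_in_T_if_card_supersets_1:
  assumes "v \<in> Mprime T" and "card (supersets T v) = 1"
  shows "v \<in> T"
proof -
  obtain m where "supersets T v = {m}" using assms(2) card_1_singletonE by blast
  then show ?thesis
    using Mprime_eq_Inter_supersets(1)[OF assms(1)] unfolding supersets_def by auto
qed

lemma Mprime_eq_Int_if_card_supersets_2:
  assumes "finite T" and "v \<in> Mprime T" and "card (supersets T v) = 2"
    and "u \<in> T" "u' \<in> T" "u \<noteq> u'" "v \<subseteq> u" "v \<subseteq> u'"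
  shows "v = u \<inter> u'"
proof -
  have "{u, u'} \<subseteq> supersets T v" using assms(4-) unfolding supersets_def by auto
  moreover have "finite (supersets T v)" using assms(1) unfolding supersets_def by simp
  ultimately have "supersets T v = {u, u'}"
    using assms(3,6) by (metis card_2_iff card_subset_eq)
  then show ?thesis using Mprime_eq_Inter_supersets(1)[OF assms(2)] by simp
qed

locale Gstar_periodic_cycle =
  fixes n :: nat and T :: "nat set set" and k :: nat and e :: "nat \<Rightarrow> nat set"
  assumes length_ge_3: "k \<ge> 3"
    and adjacent: "Gstar_adj n T (e i) (e (Suc i))"
    and eq_iff_mod: "e i = e j \<longleftrightarrow> i mod k = j mod k"

lemma Gstar_has_cycle_periodic:
  assumes "Gstar_has_cycle n T"
  shows "\<exists>k e. Gstar_periodic_cycle n T k e"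
proof -
  obtain k :: nat and c where "k \<ge> 3" and inj: "inj_on c {0..<k}"
    and adj: "\<forall>i<k. Gstar_adj n T (c i) (c ((i + 1) mod k))"
    using assms unfolding Gstar_has_cycle_def by blast
  have "Gstar_periodic_cycle n T k (\<lambda>i. c (i mod k))"
  proof
    show "k \<ge> 3" by fact
    show "Gstar_adj n T (c (i mod k)) (c (Suc i mod k))" for i
      using adj[rule_format, of "i mod k"] \<open>k \<ge> 3\<close> by (simp add: mod_Suc_eq)
    show "c (i mod k) = c (j mod k) \<longleftrightarrow> i mod k = j mod k" for i j
      using inj \<open>k \<ge> 3\<close> unfolding inj_on_def by auto
  qed
  then show ?thesis by blast
qed

context Gstar_periodic_cycle
begin

lemma shift: "Gstar_periodic_cycle n T k (\<lambda>i. e (i + p))"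
proof
  show "k \<ge> 3" by (fact length_ge_3)
  show "Gstar_adj n T (e (i + p)) (e (Suc i + p))" for i
    using adjacent[of "i + p"] by simp
  show "e (i + p) = e (j + p) \<longleftrightarrow> i mod k = j mod k" for i j
    unfolding eq_iff_mod using nat_mod_eq_iff by auto
qed

lemma neq_Suc_Suc: "e i \<noteq> e (Suc (Suc i))"
proof
  assume "e i = e (Suc (Suc i))"
  then have "k dvd 2" using eq_iff_mod mod_eq_dvd_iff_nat[of i "Suc (Suc i)" k] by simp
  then show False using length_ge_3 by (auto dest: dvd_imp_le)
qed

lemma in_Mprime: "e i \<in> Mprime T"
proof -
  have "e (Suc i) \<in> Mprime T" for i
  proof (rule ccontr)
    assume not_Mprime: "e (Suc i) \<notin> Mprime T"
    moreover have "e (Suc i) \<in> Mstar n T"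
      using adjacent[of i] unfolding Gstar_adj_def hasse_arc_def by blast
    ultimately obtain x where x: "e (Suc i) = {x}"
      unfolding Mstar_def singletons_def by blast
    then have "e i = e (Suc (Suc i))"
      using Gstar_adj_singleton_unique not_Mprime adjacent[of i] adjacent[of "Suc i"] by metis
    then show False using neq_Suc_Suc by blast
  qed
  moreover have "e i = e (Suc (i + k - 1))"
    using eq_iff_mod length_ge_3 by simp
  ultimately show ?thesis by simp
qed

lemma descends_or_ascends: "hasse_arc n T (e i) (e (Suc i)) \<or> hasse_arc n T (e (Suc i)) (e i)"
  using adjacent unfolding Gstar_adj_def .

lemma ascends_if_not_descends: "\<not> e (Suc i) \<subset> e i \<Longrightarrow> e i \<subset> e (Suc i)"
  using descends_or_ascends[of i] hasse_arc_psubset by blast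

lemma descends_iff_hasse_arc: "e (Suc i) \<subset> e i \<longleftrightarrow> hasse_arc n T (e i) (e (Suc i))"
  using descends_or_ascends[of i] by (auto dest: hasse_arc_psubset)

end

locale Gstar_cycle_triangle_free = Gstar_periodic_cycle +
  assumes finite: "finite T" and triangle_free: "triangle_free T"
begin

lemma card_supersets_descends:
  assumes "e (Suc i) \<subset> e i"
  shows "card (supersets T (e i)) = 1" and "card (supersets T (e (Suc i))) = 2"
  using hasse_arc_card_supersets[OF finite triangle_free _ in_Mprime in_Mprime]
    assms[unfolded descends_iff_hasse_arc] by blast+

lemma card_supersets_ascends:
  assumes "\<not> e (Suc i) \<subset> e i"
  shows "card (supersets T (e (Suc i))) = 1" and "card (supersets T (e i)) = 2"
proof -
  have "hasse_arc n T (e (Suc i)) (e i)"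
    using descends_or_ascends[of i] assms descends_iff_hasse_arc by blast
  then show "card (supersets T (e (Suc i))) = 1" and "card (supersets T (e i)) = 2"
    using hasse_arc_card_supersets[OF finite triangle_free _ in_Mprime in_Mprime] by blast+
qed

text \<open>Along the cycle, members of \<open>T\<close> (one superset) and pairwise intersections (two supersets)
  alternate, so the walk alternately descends and ascends.\<close>

lemma descends_Suc_iff: "e (Suc (Suc i)) \<subset> e (Suc i) \<longleftrightarrow> \<not> e (Suc i) \<subset> e i"
proof
  assume "e (Suc (Suc i)) \<subset> e (Suc i)"
  then have "card (supersets T (e (Suc i))) = 1" by (rule card_supersets_descends(1))
  then show "\<not> e (Suc i) \<subset> e i" using card_supersets_descends(2)[of i] by auto
next
  assume "\<not> e (Suc i) \<subset> e i"
  then have "card (supersets T (e (Suc i))) = 1" by (rule card_supersets_ascends(1))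
  then show "e (Suc (Suc i)) \<subset> e (Suc i)" using card_supersets_ascends(2)[of "Suc i"] by auto
qed

lemma descends_iff_even: "e (Suc i) \<subset> e i \<longleftrightarrow> (even i \<longleftrightarrow> e 1 \<subset> e 0)"
proof (induction i)
  case (Suc i)
  then show ?case using descends_Suc_iff[of i] by (cases "even i") simp_all
qed simp

lemma even_length: "even k"
proof -
  have "e k = e 0" and "e (Suc k) = e 1"
    unfolding eq_iff_mod by (simp_all add: mod_Suc_eq[of k k, symmetric])
  then have "e 1 \<subset> e 0 \<longleftrightarrow> (even k \<longleftrightarrow> e 1 \<subset> e 0)"
    using descends_iff_even[of k] by metis
  then show ?thesis by blast
qed

end

locale Gstar_cycle_descending = Gstar_cycle_triangle_free +
  assumes starts_descending: "e 1 \<subset> e 0"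
begin

lemma descends_iff: "e (Suc i) \<subset> e i \<longleftrightarrow> even i"
  using descends_iff_even[of i] starts_descending by simp

lemma even_vertex_in_T: "e (2 * j) \<in> T"
  using card_supersets_descends(1) descends_iff in_Mprime Mprime_in_T_if_card_supersets_1
  by simp

lemma odd_vertex_eq_Int: "e (2 * j + 1) = e (2 * j) \<inter> e (2 * (j + 1))"
proof (rule Mprime_eq_Int_if_card_supersets_2[OF finite in_Mprime])
  show "card (supersets T (e (2 * j + 1))) = 2"
    using card_supersets_descends(2)[of "2 * j"] descends_iff by simp
  show "e (2 * j) \<in> T" and "e (2 * (j + 1)) \<in> T" by (rule even_vertex_in_T)+
  show "e (2 * j) \<noteq> e (2 * (j + 1))" using neq_Suc_Suc by simp
  show "e (2 * j + 1) \<subseteq> e (2 * j)" using descends_iff[of "2 * j"] by simp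
  show "e (2 * j + 1) \<subseteq> e (2 * (j + 1))"
    using ascends_if_not_descends[of "2 * j + 1"] descends_iff[of "2 * j + 1"] by simp
qed

lemma intersection_cycle_even_vertices: "intersection_cycle T (k div 2) (\<lambda>j. e (2 * j))"
proof -
  define h where "h = k div 2"
  have k: "k = 2 * h" using even_length unfolding h_def by simp
  have e_even_mod: "e (2 * (j mod h)) = e (2 * j)" for j
    unfolding eq_iff_mod k by (simp flip: mult_mod_right)
  have "h \<noteq> 2"
  proof
    assume "h = 2"
    then have "e 1 = e 3"
      using odd_vertex_eq_Int[of 0] odd_vertex_eq_Int[of 1] e_even_mod[of 2] by (simp add: Int_commute)
    then show False using eq_iff_mod k \<open>h = 2\<close> by simp
  qed
  then have "h \<ge> 3" using length_ge_3 k by simp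
  moreover have "inj_on (\<lambda>j. e (2 * j)) {0..<h}"
    by (rule inj_onI) (simp add: eq_iff_mod k flip: mult_mod_right)
  moreover have "e (2 * j) \<inter> e (2 * ((j + 1) mod h)) \<noteq> {}" for j
    using odd_vertex_eq_Int[of j] e_even_mod[of "j + 1"] Mprime_nonempty[OF in_Mprime] by metis
  ultimately show ?thesis
    using even_vertex_in_T unfolding intersection_cycle_def h_def by blast
qed

end

lemma (in Gstar_cycle_triangle_free) intersection_cycle_exists: "\<exists>h d. intersection_cycle T h d"
proof -
  obtain p where "e (Suc p) \<subset> e p"
    using descends_Suc_iff[of 0] by blast
  interpret shifted: Gstar_cycle_descending n T k "\<lambda>i. e (i + p)"
    by (intro Gstar_cycle_descending.intro Gstar_cycle_triangle_free.intro shift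
        Gstar_cycle_triangle_free_axioms.intro Gstar_cycle_descending_axioms.intro finite triangle_free)
      (simp add: \<open>e (Suc p) \<subset> e p\<close>)
  show ?thesis using shifted.intersection_cycle_even_vertices by blast
qed

lemma Gstar_cycle_imp_intersection_cycle:
  assumes "finite T" and "Gstar_has_cycle n T"
  shows "\<exists>k c. intersection_cycle T k c"
proof (cases "triangle_free T")
  case True
  obtain k e where "Gstar_periodic_cycle n T k e"
    using Gstar_has_cycle_periodic[OF assms(2)] by blast
  then interpret Gstar_cycle_triangle_free n T k e
    by (intro Gstar_cycle_triangle_free.intro Gstar_cycle_triangle_free_axioms.intro assms(1) True)
  show ?thesis by (rule intersection_cycle_exists)
next
  case False
  then show ?thesis using intersection_cycle_of_triangle by blast
qed

theorem corollary4p11: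
  fixes n :: nat and T :: "nat set set"
  assumes "\<forall>m \<in> T. monomial n m"
    and "Gstar_has_cycle n T"
  shows "(\<exists>m1 \<in> T. \<exists>m2 \<in> T. \<exists>m3 \<in> T. m1 \<inter> m2 \<inter> m3 \<noteq> {} \<and>
            m3 \<inter> m1 \<subset> m3 \<inter> (m1 \<union> m2) \<and> m3 \<inter> m2 \<subset> m3 \<inter> (m1 \<union> m2))
       \<or> (\<exists>k (m :: nat \<Rightarrow> nat set). k \<ge> 3 \<and> inj_on m {0..<k} \<and> (\<forall>i<k. m i \<in> T) \<and>
            (\<forall>i<k. \<forall>j<k. m i \<inter> m j \<noteq> {} \<longleftrightarrow>
                (j = i \<or> j = (i + 1) mod k \<or> i = (j + 1) mod k)))"
proof -
  have "T \<subseteq> Pow {1..n}" and "{} \<notin> T"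
    using assms(1) unfolding monomial_def by auto
  have "finite T"
    using \<open>T \<subseteq> Pow {1..n}\<close> by (rule finite_subset) simp
  then obtain k c where "intersection_cycle T k c"
    using Gstar_cycle_imp_intersection_cycle assms(2) by blast
  then show ?thesis using \<open>{} \<notin> T\<close> by (intro disjI2 induced_intersection_cycle_exists)
qed

end
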